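(* Let $w\in\mathbb Q$ with $w>-\mu_\kappa$, and let $k\in\{1,\dots,\kappa\}$ be such that $-\mu_k\leq w<-\mu_{k-1}$ (convention $\mu_0=-\infty$). Then $\epsilon(w)$ is greater than or equal to the minimum of the set $$\{\epsilon(w')\,\ell^{d_{w,w'}-\alpha_{k-1}}: w'\in\Delta(w)\}\cup\{-\mu_{k-1}-w,\ \min(\pi(\Psi(w))\setminus\{w\})-w\},$$ where $\min\emptyset=+\infty$ and $d_{w,w'}=\min\{\alpha\in\{0,\dots,n\}:\exists(\ell^\alpha,\beta)\in\mathcal P(L),\ w'=\frac{\psi(w)-\beta}{\ell^\alpha}\}$; this minimum is a positive element of $\mathbb Q_{>0}\cup\{+\infty\}$.
   Context: Let $\mathbf K$ be a field and $\ell\geq 2$ an integer. Let $L=a_n\phi_\ell^n+\dots+a_0$ with $n\geq1$, $a_i\in\mathbf K[z]$, $a_0a_n\neq0$, where $\phi_\ell(f)(z)=f(z^\ell)$ acting on Hahn series with coefficients in $\mathbf K$ and value group $\mathbb Q$. Let $\mathcal P(L)=\{(\ell^i,j): 0\le i\le n,\ j\in\operatorname{supp} a_i\}$. The Newton polygon of $L$ is the convex hull of $\{(\ell^i,j): 0\le i\le n,\ j\geq\operatorname{val} a_i\}\subset\mathbb R^2$; its non-vertical edges have slopes $\mu_1<\dots<\mu_\kappa$, $\mathcal S(L)=\{\mu_1,\dots,\mu_\kappa\}$; its vertices ordered by increasing abscissa are $p_0,\dots,p_\kappa$ with $p_k=(\ell^{\alpha_k},\beta_k)$, $\beta_k=\operatorname{val}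 a_{\alpha_k}$, the edge of slope $\mu_k$ joining $p_{k-1}$ and $p_k$. Define $\Psi(v)=\{v\ell^i+j:(\ell^i,j)\in\mathcal P(L)\}$, $\psi(v)=\min\Psi(v)$, $\pi(q)=\max\{(q-j)/\ell^i:(\ell^i,j)\in\mathcal P(L)\}$, and $\Delta(w)=\left\{\frac{\psi(w)-\beta}{\ell^\alpha}:(\ell^\alpha,\beta)\in\mathcal P(L)\right\}\setminus\{w\}$. Let $\mathcal V_0=-\mathcal S(L)$, $\mathcal V_{i+1}=\bigcup_{v\in\mathcal V_i}\pi(\Psi(v))$, $\mathcal V=\bigcup_{i\ge0}\mathcal V_i$ (a well-ordered set). For $v\in\mathbb Q$ let $\epsilon(v)=\min\{u\in\mathcal V: u>v\}-v\in\mathbb Q_{>0}\cup\{+\infty\}$ ($+\infty$ if the set is empty). *)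

theory Defs
  imports "HOL-Analysis.Analysis" "HOL-Computational_Algebra.Polynomial"
begin

text \<open>The operator L = a_n phi^n + ... + a_0 is given by l, n and the coefficient
  function a (only a 0, ..., a n matter). A point (l^i, j) of P(L) is encoded by the
  pair of naturals (i, j).\<close>

definition pval :: "'a::zero poly \<Rightarrow> nat" where
  "pval p = (LEAST j. coeff p j \<noteq> 0)"

definition PL :: "nat \<Rightarrow> (nat \<Rightarrow> 'a::zero poly) \<Rightarrow> (nat \<times> nat) set" where
  "PL n a = {(i, j). i \<le> n \<and> coeff (a i) j \<noteq> 0}"

definition newton_polygon :: "nat \<Rightarrow> nat \<Rightarrow> (nat \<Rightarrow> 'a::zero poly) \<Rightarrow> (real \<times> real) set" where
  "newton_polygon l n a =
     convex hull {(real l ^ i, y) | i y. i \<le> n \<and> a i \<noteq> 0 \<and> real (pval (a i)) \<le> y}"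

definition NP_alphas :: "nat \<Rightarrow> nat \<Rightarrow> (nat \<Rightarrow> 'a::zero poly) \<Rightarrow> nat list" where
  "NP_alphas l n a = sorted_list_of_set
     {i. i \<le> n \<and> (\<exists>y. (real l ^ i, y) extreme_point_of newton_polygon l n a)}"

definition NP_kappa :: "nat \<Rightarrow> nat \<Rightarrow> (nat \<Rightarrow> 'a::zero poly) \<Rightarrow> nat" where
  "NP_kappa l n a = length (NP_alphas l n a) - 1"

definition NP_alpha :: "nat \<Rightarrow> nat \<Rightarrow> (nat \<Rightarrow> 'a::zero poly) \<Rightarrow> nat \<Rightarrow> nat" where
  "NP_alpha l n a k = NP_alphas l n a ! k"

definition NP_beta :: "nat \<Rightarrow> nat \<Rightarrow> (nat \<Rightarrow> 'a::zero poly) \<Rightarrow> nat \<Rightarrow> nat" where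
  "NP_beta l n a k = pval (a (NP_alpha l n a k))"

definition NP_mu :: "nat \<Rightarrow> nat \<Rightarrow> (nat \<Rightarrow> 'a::zero poly) \<Rightarrow> nat \<Rightarrow> rat" where
  "NP_mu l n a k =
     (of_nat (NP_beta l n a k) - of_nat (NP_beta l n a (k - 1))) /
     (of_nat l ^ NP_alpha l n a k - of_nat l ^ NP_alpha l n a (k - 1))"

definition NP_slopes :: "nat \<Rightarrow> nat \<Rightarrow> (nat \<Rightarrow> 'a::zero poly) \<Rightarrow> rat set" where
  "NP_slopes l n a = NP_mu l n a ` {1..NP_kappa l n a}"

definition Psi :: "nat \<Rightarrow> nat \<Rightarrow> (nat \<Rightarrow> 'a::zero poly) \<Rightarrow> rat \<Rightarrow> rat set" where
  "Psi l n a v = {v * of_nat l ^ i + of_nat j | i j. (i, j) \<in> PL n a}"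

definition psi :: "nat \<Rightarrow> nat \<Rightarrow> (nat \<Rightarrow> 'a::zero poly) \<Rightarrow> rat \<Rightarrow> rat" where
  "psi l n a v = Min (Psi l n a v)"

definition piL :: "nat \<Rightarrow> nat \<Rightarrow> (nat \<Rightarrow> 'a::zero poly) \<Rightarrow> rat \<Rightarrow> rat" where
  "piL l n a q = Max {(q - of_nat j) / of_nat l ^ i | i j. (i, j) \<in> PL n a}"

definition Delta :: "nat \<Rightarrow> nat \<Rightarrow> (nat \<Rightarrow> 'a::zero poly) \<Rightarrow> rat \<Rightarrow> rat set" where
  "Delta l n a w =
     {(psi l n a w - of_nat \<beta>) / of_nat l ^ \<alpha> | \<alpha> \<beta>. (\<alpha>, \<beta>) \<in> PL n a} - {w}"

fun Vi :: "nat \<Rightarrow> nat \<Rightarrow> (nat \<Rightarrow> 'a::zero poly) \<Rightarrow> nat \<Rightarrow> rat set" where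
  "Vi l n a 0 = uminus ` NP_slopes l n a"
| "Vi l n a (Suc m) = (\<Union>v\<in>Vi l n a m. piL l n a ` Psi l n a v)"

definition Vset :: "nat \<Rightarrow> nat \<Rightarrow> (nat \<Rightarrow> 'a::zero poly) \<Rightarrow> rat set" where
  "Vset l n a = (\<Union>m. Vi l n a m)"

definition eps :: "nat \<Rightarrow> nat \<Rightarrow> (nat \<Rightarrow> 'a::zero poly) \<Rightarrow> rat \<Rightarrow> ereal" where
  "eps l n a v =
     (if \<exists>u\<in>Vset l n a. v < u
      then ereal (real_of_rat ((LEAST u. u \<in> Vset l n a \<and> v < u) - v))
      else \<infinity>)"

definition dww :: "nat \<Rightarrow> nat \<Rightarrow> (nat \<Rightarrow> 'a::zero poly) \<Rightarrow> rat \<Rightarrow> rat \<Rightarrow> nat" where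
  "dww l n a w w' = (LEAST \<alpha>. \<alpha> \<le> n \<and>
      (\<exists>\<beta>. (\<alpha>, \<beta>) \<in> PL n a \<and> w' = (psi l n a w - of_nat \<beta>) / of_nat l ^ \<alpha>))"

end

theory Submission
  imports Defs
begin

text \<open>The set V is well ordered: it is the closure of the finite set -S(L) under the finitely many
  maps v \<mapsto> pi(v l^i + j), which are monotone and inflationary, and a minimal-bad-sequence argument
  rules out infinite descending chains in such a closure. Hence epsilon(w) = u - w for the least
  u \<in> V above w, and it suffices to show that u - w dominates one of the listed terms for every
  u \<in> V above w. This goes by induction on the generation of u. For u = -mu_j one gets
  u - w \<ge> -mu_(k-1) - w since the slopes increase. For u = pi(v l^i + j): if v > w, use induction
  and u \<ge> v; if v = w, then u \<in> pi(Psi(w)) - {w}; if v < w, then w' = (psi(w) - j)/l^i is an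
  element of Delta(w) below v, whence
  epsilon(w') l^(d - alpha_(k-1)) \<le> (v - w') l^(i - alpha_(k-1)) \<le> u - w.
  The last inequality uses psi(w) = w l^alpha_(k-1) + beta_(k-1): the vertex p_(k-1) supports
  the Newton polygon in the direction given by w.\<close>

section \<open>Well-foundedness of closures under inflationary maps\<close>

lemma lift_Suc_antimono_less:
  fixes s :: "nat \<Rightarrow> 'b::order"
  assumes "\<And>k. s (Suc k) < s k" and "k < k'"
  shows "s k' < s k"
  using lift_Suc_antimono_le[of s "Suc k" k'] assms less_imp_le[OF assms(1)]
  by (metis Suc_leI order_le_less_trans)

lemma infinite_nonzero_positions_outside:
  fixes s :: "nat \<Rightarrow> 'b"
  assumes "inj s" and "finite A"
  shows "infinite {k. 0 < k \<and> s k \<notin> A}"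
proof -
  have "finite (s -` A)"
    using assms(2,1) by (rule finite_vimageI)
  moreover have "{k. 0 < k \<and> s k \<notin> A} = UNIV - (s -` A \<union> {0})"
    by auto
  ultimately show ?thesis
    by (simp add: Diff_infinite_finite)
qed

lemma infinite_constant_subseq:
  fixes K :: "nat set"
  assumes "infinite K" and "f ` K \<subseteq> P" and "finite P"
  obtains p and e :: "nat \<Rightarrow> nat" where "p \<in> P" and "strict_mono e" and "\<And>i. e i \<in> K \<and> f (e i) = p"
proof -
  obtain p where p: "p \<in> P" "infinite (f -` {p} \<inter> K)"
    using inf_img_fin_domE'[OF finite_subset[OF assms(2,3)] assms(1)] assms(2) by blast
  show ?thesis
  proof (rule that[OF p(1) strict_mono_enumerate[OF p(2)]])
    show "enumerate (f -` {p} \<inter> K) i \<in> K \<and> f (enumerate (f -` {p} \<inter> K) i) = p" for i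
      using enumerate_in_set[OF p(2), of i] by simp
  qed
qed

lemma minimal_bad_chain:
  fixes W :: "'b::linorder set" and d :: "'b \<Rightarrow> nat"
  assumes "\<not> wf {(x, y). x \<in> W \<and> y \<in> W \<and> x < y}"
  obtains s where "\<And>k. s k \<in> W" and "\<And>k. s (Suc k) < s k"
    and "\<And>k g. (\<And>i. g i \<in> W \<and> g (Suc i) < g i) \<Longrightarrow> g 0 < s k \<Longrightarrow> d (s (Suc k)) \<le> d (g 0)"
proof -
  define B where "B = {u. \<exists>g. g 0 = u \<and> (\<forall>i. g i \<in> W \<and> g (Suc i) < g i)}"
  define next_B where
    "next_B u = (SOME u'. (u' \<in> B \<and> u' < u) \<and> (\<forall>u''. u'' \<in> B \<and> u'' < u \<longrightarrow> d u' \<le> d u''))" for u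
  have next_B: "(next_B u \<in> B \<and> next_B u < u) \<and> (\<forall>u''. u'' \<in> B \<and> u'' < u \<longrightarrow> d (next_B u) \<le> d u'')"
    if "u \<in> B" for u
  proof -
    from that obtain g where "g 0 = u" "\<forall>i. g i \<in> W \<and> g (Suc i) < g i"
      unfolding B_def by blast
    then have "g 1 \<in> B \<and> g 1 < u"
      unfolding B_def by (auto intro!: exI[of _ "\<lambda>i. g (Suc i)"])
    then have "\<exists>u'. (u' \<in> B \<and> u' < u) \<and> (\<forall>u''. u'' \<in> B \<and> u'' < u \<longrightarrow> d u' \<le> d u'')"
      by (rule ex_has_least_nat)
    then show ?thesis
      unfolding next_B_def by (rule someI_ex)
  qed
  from assms obtain f where f: "\<forall>i. (f (Suc i), f i) \<in> {(x, y). x \<in> W \<and> y \<in> W \<and> x < y}"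
    unfolding wf_iff_no_infinite_down_chain by blast
  define s where "s = rec_nat (f 0) (\<lambda>_. next_B)"
  have s_B: "s k \<in> B" for k
  proof (induction k)
    case 0
    show ?case
      using f unfolding s_def B_def by auto
  next
    case (Suc k)
    then show ?case
      using next_B unfolding s_def by simp
  qed
  show ?thesis
  proof
    show "s k \<in> W" for k
      using s_B[of k] unfolding B_def by (force dest: spec[of _ 0])
    show "s (Suc k) < s k" for k
      using next_B[OF s_B[of k]] unfolding s_def by simp
    show "d (s (Suc k)) \<le> d (g 0)" if "\<And>i. g i \<in> W \<and> g (Suc i) < g i" and "g 0 < s k" for k g
    proof -
      have "g 0 \<in> B"
        using that(1) unfolding B_def by blast
      then show ?thesis
        using next_B[OF s_B[of k]] that(2) unfolding s_def by simp
    qed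
  qed
qed

lemma descending_chain_parents:
  fixes V :: "nat \<Rightarrow> 'b::linorder set" and F :: "'p \<Rightarrow> 'b \<Rightarrow> 'b"
    and K :: "nat set" and s :: "nat \<Rightarrow> 'b"
  assumes "finite P"
    and parent: "\<And>m u. u \<in> V (Suc m) \<Longrightarrow> \<exists>v\<in>V m. \<exists>p\<in>P. u = F p v"
    and mono: "\<And>p v v'. p \<in> P \<Longrightarrow> v \<le> v' \<Longrightarrow> F p v \<le> F p v'"
    and "infinite K" and K: "\<And>k. k \<in> K \<Longrightarrow> s k \<in> V (Suc (m k))"
    and desc: "\<And>k k'. k < k' \<Longrightarrow> s k' < s k"
  obtains p and e :: "nat \<Rightarrow> nat" and g where "p \<in> P" and "strict_mono e" and "\<And>i. e i \<in> K"
    and "\<And>i. s (e i) = F p (g i)" and "\<And>i. g i \<in> V (m (e i))" and "\<And>i. g (Suc i) < g i"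
proof -
  have "\<exists>vp. fst vp \<in> V (m k) \<and> snd vp \<in> P \<and> s k = F (snd vp) (fst vp)" if "k \<in> K" for k
    using parent[OF K[OF that]] by fastforce
  then obtain par where par: "\<And>k. k \<in> K \<Longrightarrow>
      fst (par k) \<in> V (m k) \<and> snd (par k) \<in> P \<and> s k = F (snd (par k)) (fst (par k))"
    by metis
  have "(\<lambda>k. snd (par k)) ` K \<subseteq> P"
    using par by auto
  then obtain p and e :: "nat \<Rightarrow> nat"
    where "p \<in> P" "strict_mono e" and e: "\<And>i. e i \<in> K \<and> snd (par (e i)) = p"
    using infinite_constant_subseq[OF \<open>infinite K\<close> _ \<open>finite P\<close>] by blast
  define g where "g i = fst (par (e i))" for i
  have s_e: "s (e i) = F p (g i)" for i
    using par[of "e i"] e[of i] unfolding g_def by simp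
  have "g (Suc i) < g i" for i
  proof (rule ccontr)
    assume "\<not> g (Suc i) < g i"
    then have "s (e i) \<le> s (e (Suc i))"
      unfolding s_e using mono[OF \<open>p \<in> P\<close>] by simp
    moreover have "s (e (Suc i)) < s (e i)"
      using desc \<open>strict_mono e\<close> by (simp add: strict_mono_def)
    ultimately show False
      by simp
  qed
  moreover have "g i \<in> V (m (e i))" for i
    using par[of "e i"] e[of i] unfolding g_def by blast
  ultimately show ?thesis
    using that \<open>p \<in> P\<close> \<open>strict_mono e\<close> e s_e by blast
qed

text \<open>Take a minimal bad chain for the level, i.e. the least m with u \<in> V m. Infinitely many
  of its terms lie outside V 0, infinitely many of those arise from their parents by the same map
  F p, and these parents form a descending chain starting below a term of the chain but at a
  smaller level.\<close>
lemma wf_less_on_iterates: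
  fixes V :: "nat \<Rightarrow> 'b::linorder set" and F :: "'p \<Rightarrow> 'b \<Rightarrow> 'b"
  assumes "finite (V 0)" and "finite P"
    and parent: "\<And>m u. u \<in> V (Suc m) \<Longrightarrow> \<exists>v\<in>V m. \<exists>p\<in>P. u = F p v"
    and mono: "\<And>p v v'. p \<in> P \<Longrightarrow> v \<le> v' \<Longrightarrow> F p v \<le> F p v'"
    and inflationary: "\<And>p v. p \<in> P \<Longrightarrow> v \<le> F p v"
  shows "wf {(x, y). x \<in> (\<Union>m. V m) \<and> y \<in> (\<Union>m. V m) \<and> x < y}"
proof (rule ccontr)
  define W where "W = (\<Union>m. V m)"
  define lev where "lev u = (LEAST m. u \<in> V m)" for u
  have lev: "u \<in> V (lev u)" if "u \<in> W" for u
    using that unfolding W_def lev_def by (auto intro: LeastI)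
  have lev_le: "lev u \<le> m" if "u \<in> V m" for u m
    using that unfolding lev_def by (rule Least_le)
  assume "\<not> wf {(x, y). x \<in> (\<Union>m. V m) \<and> y \<in> (\<Union>m. V m) \<and> x < y}"
  then obtain s where s_W: "\<And>k. s k \<in> W" and s_desc: "\<And>k. s (Suc k) < s k"
    and s_minimal: "\<And>k g. (\<And>i. g i \<in> W \<and> g (Suc i) < g i) \<Longrightarrow> g 0 < s k \<Longrightarrow> lev (s (Suc k)) \<le> lev (g 0)"
    using minimal_bad_chain[of W lev] unfolding W_def by blast
  have s_less: "k < k' \<Longrightarrow> s k' < s k" for k k'
    using lift_Suc_antimono_less s_desc by blast
  define K where "K = {k. 0 < k \<and> s k \<notin> V 0}"
  have "inj s"
    by (rule injI) (metis less_irrefl nat_neq_iff s_less)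
  then have "infinite K"
    unfolding K_def using \<open>finite (V 0)\<close> by (rule infinite_nonzero_positions_outside)
  have lev_pos: "0 < lev (s k)" if "k \<in> K" for k
  proof (rule ccontr)
    assume "\<not> 0 < lev (s k)"
    then have "s k \<in> V 0"
      using lev[OF s_W[of k]] by simp
    with that show False
      unfolding K_def by simp
  qed
  have s_K: "s k \<in> V (Suc (lev (s k) - 1))" if "k \<in> K" for k
    using lev[OF s_W[of k]] lev_pos[OF that] by simp
  obtain p and e :: "nat \<Rightarrow> nat" and g :: "nat \<Rightarrow> 'b"
    where "p \<in> P" and "strict_mono e" and e_K: "\<And>i. e i \<in> K"
      and s_e: "\<And>i. s (e i) = F p (g i)" and g_V: "\<And>i. g i \<in> V (lev (s (e i)) - 1)"
      and g_desc: "\<And>i. g (Suc i) < g i"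
    by (rule descending_chain_parents[where V = V and F = F and s = s and m = "\<lambda>k. lev (s k) - 1",
          OF \<open>finite P\<close> parent mono \<open>infinite K\<close> s_K s_less])
      (rule that | assumption)+
  obtain k where k: "e 0 = Suc k"
    using e_K[of 0] unfolding K_def by (cases "e 0") auto
  have "g 0 < s k"
    using inflationary[OF \<open>p \<in> P\<close>, of "g 0"] s_e[of 0] s_desc[of k] k by simp
  moreover have "g i \<in> W \<and> g (Suc i) < g i" for i
    using g_V g_desc unfolding W_def by blast
  ultimately have "lev (s (e 0)) \<le> lev (g 0)"
    using s_minimal[of g] k by simp
  moreover have "lev (g 0) \<le> lev (s (e 0)) - 1"
    using g_V lev_le by blast
  ultimately show False
    using lev_pos[OF e_K[of 0]] by simp
qed


lemma convex_lex_halfspace: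
  fixes a c :: "'a::real_inner"
  shows "convex {x. b < a \<bullet> x \<or> (a \<bullet> x = b \<and> d \<le> c \<bullet> x)}"
proof (rule convexI)
  fix x y :: 'a and u v :: real
  assume x: "x \<in> {x. b < a \<bullet> x \<or> (a \<bullet> x = b \<and> d \<le> c \<bullet> x)}"
    and y: "y \<in> {x. b < a \<bullet> x \<or> (a \<bullet> x = b \<and> d \<le> c \<bullet> x)}"
    and uv: "0 \<le> u" "0 \<le> v" "u + v = 1"
  show "u *\<^sub>R x + v *\<^sub>R y \<in> {x. b < a \<bullet> x \<or> (a \<bullet> x = b \<and> d \<le> c \<bullet> x)}"
  proof (cases "u = 0 \<or> v = 0")
    case True
    then have "u *\<^sub>R x + v *\<^sub>R y = x \<or> u *\<^sub>R x + v *\<^sub>R y = y"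
      using uv by auto
    then show ?thesis
      using x y by auto
  next
    case False
    then have "0 < u" "0 < v"
      using uv by auto
    have lin: "e \<bullet> (u *\<^sub>R x + v *\<^sub>R y) = u * (e \<bullet> x) + v * (e \<bullet> y)" for e
      by (simp add: inner_add_right)
    have convex_comb: "r = u * r + v * r" for r :: real
      using uv by (metis distrib_right mult_1)
    have "b \<le> a \<bullet> x" "b \<le> a \<bullet> y"
      using x y by auto
    consider "b < a \<bullet> x \<or> b < a \<bullet> y" | "a \<bullet> x = b" "a \<bullet> y = b" "d \<le> c \<bullet> x" "d \<le> c \<bullet> y"
      using x y by auto
    then show ?thesis
    proof cases
      case 1
      then have "u * b + v * b < u * (a \<bullet> x) + v * (a \<bullet> y)"
        using \<open>b \<le> a \<bullet> x\<close> \<open>b \<le> a \<bullet> y\<close> \<open>0 < u\<close> \<open>0 < v\<close>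
        by (auto intro: add_less_le_mono add_le_less_mono mult_left_mono)
      then show ?thesis
        using convex_comb[of b] by (simp add: lin)
    next
      case 2
      then have "u * d + v * d \<le> u * (c \<bullet> x) + v * (c \<bullet> y)"
        using uv by (intro add_mono mult_left_mono) auto
      then show ?thesis
        using 2 convex_comb[of b] convex_comb[of d] by (simp add: lin)
    qed
  qed
qed

lemma extreme_point_of_convex_hull_lex_min:
  fixes a c :: "'a::real_inner"
  assumes "x0 \<in> Q"
    and lex_min: "\<And>q. q \<in> Q \<Longrightarrow> a \<bullet> x0 < a \<bullet> q \<or> (a \<bullet> q = a \<bullet> x0 \<and> c \<bullet> x0 \<le> c \<bullet> q)"
    and unique: "\<And>x. a \<bullet> x = a \<bullet> x0 \<Longrightarrow> c \<bullet> x = c \<bullet> x0 \<Longrightarrow> x = x0"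
  shows "x0 extreme_point_of convex hull Q"
proof -
  define H where "H = convex hull Q"
  define F where "F = H \<inter> {x. a \<bullet> x = a \<bullet> x0}"
  have "H \<subseteq> {x. a \<bullet> x0 < a \<bullet> x \<or> (a \<bullet> x = a \<bullet> x0 \<and> c \<bullet> x0 \<le> c \<bullet> x)}"
    unfolding H_def using lex_min by (intro hull_minimal convex_lex_halfspace) auto
  then have H_lex: "a \<bullet> x0 \<le> a \<bullet> x" "a \<bullet> x = a \<bullet> x0 \<Longrightarrow> c \<bullet> x0 \<le> c \<bullet> x" if "x \<in> H" for x
    using that by auto
  have "F face_of H"
    unfolding F_def using H_lex(1) by (intro face_of_Int_supporting_hyperplane_ge) (auto simp: H_def)
  moreover have "x0 extreme_point_of F"
  proof (rule extreme_point_of_Int_supporting_hyperplane_ge)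
    show "F \<inter> {x. c \<bullet> x = c \<bullet> x0} = {x0}"
      using unique \<open>x0 \<in> Q\<close> hull_inc[of x0 Q] unfolding F_def H_def by auto
    show "c \<bullet> x0 \<le> c \<bullet> x" if "x \<in> F" for x
      using that H_lex(2) unfolding F_def by auto
  qed
  ultimately show ?thesis
    unfolding H_def[symmetric] by (meson face_of_singleton face_of_trans)
qed

lemma finite_lex_argmin:
  fixes g :: "nat \<Rightarrow> 'b::linorder"
  assumes "finite A" and "A \<noteq> {}"
  obtains i0 where "i0 \<in> A" and "\<And>i. i \<in> A \<Longrightarrow> g i0 \<le> g i"
    and "\<And>i. i \<in> A \<Longrightarrow> g i = g i0 \<Longrightarrow> i0 \<le> i"
proof -
  define J where "J = {i \<in> A. g i = Min (g ` A)}"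
  have "Min (g ` A) \<in> g ` A"
    using assms by simp
  then have "finite J" and "J \<noteq> {}"
    unfolding J_def using assms(1) by auto
  then have "Min J \<in> J"
    by (rule Min_in)
  show ?thesis
  proof (rule that[of "Min J"])
    show "Min J \<in> A"
      using \<open>Min J \<in> J\<close> unfolding J_def by simp
    show "g (Min J) \<le> g i" if "i \<in> A" for i
      using \<open>Min J \<in> J\<close> that assms(1) unfolding J_def by simp
    show "Min J \<le> i" if "i \<in> A" and "g i = g (Min J)" for i
      using that \<open>Min J \<in> J\<close> \<open>finite J\<close> unfolding J_def by simp
  qed
qed

lemma of_rat_power_int: "of_rat (x powi e) = (of_rat x :: 'b::field_char_0) powi e"
  by (simp add: power_int_def of_rat_inverse of_rat_power)

lemma Inf_finite_mem:
  fixes A :: "'b::complete_linorder set"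
  shows "finite A \<Longrightarrow> A \<noteq> {} \<Longrightarrow> Inf A \<in> A"
  by (rule finite_Inf_in) (auto simp: inf_min min_def)


section \<open>The maps psi and pi and the well-ordered set V\<close>

lemma coeff_pval_nonzero: "p \<noteq> 0 \<Longrightarrow> coeff p (pval p) \<noteq> 0"
  unfolding pval_def by (rule LeastI_ex) (use leading_coeff_neq_0 in blast)

lemma pval_le: "coeff p j \<noteq> 0 \<Longrightarrow> pval p \<le> j"
  unfolding pval_def by (rule Least_le)

lemma finite_PL: "finite (PL n a)"
proof (rule finite_subset)
  show "PL n a \<subseteq> (\<Union>i\<le>n. {i} \<times> {..degree (a i)})"
    unfolding PL_def by (auto intro: le_degree)
qed auto

lemma pval_in_PL: "i \<le> n \<Longrightarrow> a i \<noteq> 0 \<Longrightarrow> (i, pval (a i)) \<in> PL n a"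
  unfolding PL_def by (simp add: coeff_pval_nonzero)

lemma Psi_eq_image: "Psi l n a v = (\<lambda>(i, j). v * of_nat l ^ i + of_nat j) ` PL n a"
  unfolding Psi_def by auto

lemma piL_eq_Max_image: "piL l n a q = Max ((\<lambda>(i, j). (q - of_nat j) / of_nat l ^ i) ` PL n a)"
  unfolding piL_def by (rule arg_cong[of _ _ Max]) auto

locale mahler_operator =
  fixes l n :: nat and a :: "nat \<Rightarrow> 'a::zero poly"
  assumes l_ge_2: "2 \<le> l" and a0_nonzero: "a 0 \<noteq> 0"
begin

lemma PL_nonempty: "PL n a \<noteq> {}"
  using pval_in_PL[of 0 n a] a0_nonzero by auto

lemma finite_Psi: "finite (Psi l n a v)"
  unfolding Psi_eq_image by (simp add: finite_PL)

lemma psi_le: "(i, j) \<in> PL n a \<Longrightarrow> psi l n a v \<le> v * of_nat l ^ i + of_nat j"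
  unfolding psi_def using finite_Psi by (intro Min_le) (auto simp: Psi_def)

lemma psi_attained:
  obtains i j where "(i, j) \<in> PL n a" and "psi l n a v = v * of_nat l ^ i + of_nat j"
proof -
  have "psi l n a v \<in> Psi l n a v"
    unfolding psi_def using finite_Psi PL_nonempty by (intro Min_in) (auto simp: Psi_eq_image)
  then show ?thesis
    using that unfolding Psi_eq_image by auto
qed

lemma piL_ge: "(i, j) \<in> PL n a \<Longrightarrow> (q - of_nat j) / of_nat l ^ i \<le> piL l n a q"
  unfolding piL_eq_Max_image using finite_PL by (intro Max_ge) auto

lemma piL_attained:
  obtains i j where "(i, j) \<in> PL n a" and "piL l n a q = (q - of_nat j) / of_nat l ^ i"
proof -
  have "piL l n a q \<in> (\<lambda>(i, j). (q - of_nat j) / of_nat l ^ i) ` PL n a"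
    unfolding piL_eq_Max_image using finite_PL PL_nonempty by (intro Max_in) auto
  then show ?thesis
    using that by auto
qed

lemma pow_l_pos: "(0::rat) < of_nat l ^ i"
  using l_ge_2 by simp

lemma piL_mono: "q \<le> q' \<Longrightarrow> piL l n a q \<le> piL l n a q'"
proof -
  assume "q \<le> q'"
  obtain i j where ij: "(i, j) \<in> PL n a" "piL l n a q = (q - of_nat j) / of_nat l ^ i"
    by (rule piL_attained)
  have "(q - of_nat j) / of_nat l ^ i \<le> (q' - of_nat j) / of_nat l ^ i"
    using \<open>q \<le> q'\<close> pow_l_pos[of i] by (simp add: divide_right_mono)
  also have "\<dots> \<le> piL l n a q'"
    by (rule piL_ge[OF ij(1)])
  finally show ?thesis
    using ij by simp
qed

lemma le_piL:
  assumes "(i, j) \<in> PL n a"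
  shows "v \<le> piL l n a (v * of_nat l ^ i + of_nat j)"
proof -
  have "(v * of_nat l ^ i + of_nat j - of_nat j) / of_nat l ^ i = v"
    using pow_l_pos[of i] by simp
  then show ?thesis
    using piL_ge[OF assms, of "v * of_nat l ^ i + of_nat j"] by simp
qed

lemma piL_psi: "piL l n a (psi l n a w) = w"
proof (rule antisym)
  obtain i j where "(i, j) \<in> PL n a" and "piL l n a (psi l n a w) = (psi l n a w - of_nat j) / of_nat l ^ i"
    by (rule piL_attained)
  then show "piL l n a (psi l n a w) \<le> w"
    using psi_le[of i j w] pow_l_pos[of i] by (simp add: divide_le_eq)
next
  obtain i j where "(i, j) \<in> PL n a" and "psi l n a w = w * of_nat l ^ i + of_nat j"
    by (rule psi_attained)
  then show "w \<le> piL l n a (psi l n a w)"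
    using le_piL by simp
qed

lemma wf_less_on_Vset: "wf {(x, y). x \<in> Vset l n a \<and> y \<in> Vset l n a \<and> x < y}"
  unfolding Vset_def
proof (rule wf_less_on_iterates[where P = "PL n a"
      and F = "\<lambda>(i, j) v. piL l n a (v * of_nat l ^ i + of_nat j)"])
  show "finite (Vi l n a 0)"
    by (simp add: NP_slopes_def)
  show "\<exists>v\<in>Vi l n a m. \<exists>p\<in>PL n a. u = (\<lambda>(i, j) v. piL l n a (v * of_nat l ^ i + of_nat j)) p v"
    if "u \<in> Vi l n a (Suc m)" for m u
  proof -
    from that obtain v i j where "v \<in> Vi l n a m" "(i, j) \<in> PL n a"
      and "u = piL l n a (v * of_nat l ^ i + of_nat j)"
      by (auto simp: Psi_def)
    then show ?thesis
      by (intro bexI[of _ v] bexI[of _ "(i, j)"]) auto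
  qed
  show "(\<lambda>(i, j) v. piL l n a (v * of_nat l ^ i + of_nat j)) p v
      \<le> (\<lambda>(i, j) v. piL l n a (v * of_nat l ^ i + of_nat j)) p v'" if "v \<le> v'" for p v v'
    using that by (cases p) (simp add: piL_mono mult_right_mono less_imp_le[OF pow_l_pos])
qed (auto simp: finite_PL le_piL)

lemma eps_eq_least_gap:
  assumes "u \<in> Vset l n a" and "v < u"
  obtains u0 where "u0 \<in> Vset l n a" and "v < u0" and "\<And>u. u \<in> Vset l n a \<Longrightarrow> v < u \<Longrightarrow> u0 \<le> u"
    and "eps l n a v = ereal (real_of_rat (u0 - v))"
proof -
  obtain u0 where u0: "u0 \<in> {u \<in> Vset l n a. v < u}"
    and min: "\<And>u. (u, u0) \<in> {(x, y). x \<in> Vset l n a \<and> y \<in> Vset l n a \<and> x < y} \<Longrightarrow> u \<notin> {u \<in> Vset l n a. v < u}"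
    using wfE_min[OF wf_less_on_Vset, of u "{u \<in> Vset l n a. v < u}"] assms by blast
  have least: "u0 \<le> u" if "u \<in> Vset l n a" "v < u" for u
  proof (rule ccontr)
    assume "\<not> u0 \<le> u"
    then have "(u, u0) \<in> {(x, y). x \<in> Vset l n a \<and> y \<in> Vset l n a \<and> x < y}"
      using u0 that by auto
    with min that show False
      by blast
  qed
  have "(LEAST u. u \<in> Vset l n a \<and> v < u) = u0"
    using u0 least by (intro Least_equality) auto
  with assms have "eps l n a v = ereal (real_of_rat (u0 - v))"
    unfolding eps_def by auto
  with u0 least show ?thesis
    using that by blast
qed

lemma eps_le: "u \<in> Vset l n a \<Longrightarrow> v < u \<Longrightarrow> eps l n a v \<le> ereal (real_of_rat (u - v))"
  by (rule eps_eq_least_gap) (auto simp: of_rat_less_eq)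

lemma eps_cases:
  obtains "eps l n a v = \<infinity>"
  | u where "u \<in> Vset l n a" and "v < u" and "eps l n a v = ereal (real_of_rat (u - v))"
proof (cases "\<exists>u\<in>Vset l n a. v < u")
  case True
  then obtain u where "u \<in> Vset l n a" "v < u"
    by blast
  then show ?thesis
    by (rule eps_eq_least_gap) (rule that(2))
next
  case False
  then show ?thesis
    by (intro that(1)) (simp add: eps_def)
qed

end


section \<open>Vertices and edges of the Newton polygon\<close>

definition NP_points :: "nat \<Rightarrow> nat \<Rightarrow> (nat \<Rightarrow> 'a::zero poly) \<Rightarrow> (real \<times> real) set" where
  "NP_points l n a = {(real l ^ i, y) | i y. i \<le> n \<and> a i \<noteq> 0 \<and> real (pval (a i)) \<le> y}"

definition NP_support :: "nat \<Rightarrow> (nat \<Rightarrow> 'a::zero poly) \<Rightarrow> nat set" where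
  "NP_support n a = {i. i \<le> n \<and> a i \<noteq> 0}"

lemma newton_polygon_eq_hull: "newton_polygon l n a = convex hull NP_points l n a"
  unfolding newton_polygon_def NP_points_def ..

lemma vertex_in_NP_points: "i \<in> NP_support n a \<Longrightarrow> (real l ^ i, real (pval (a i))) \<in> NP_points l n a"
  unfolding NP_points_def NP_support_def by auto

lemma newton_polygon_translate_up:
  assumes "z \<in> newton_polygon l n a" and "0 \<le> d"
  shows "z + (0, d) \<in> newton_polygon l n a"
proof -
  have "(+) (0, d) ` NP_points l n a \<subseteq> NP_points l n a"
    unfolding NP_points_def using assms(2) by force
  then have "(+) (0, d) ` newton_polygon l n a \<subseteq> newton_polygon l n a"
    unfolding newton_polygon_eq_hull
    by (metis convex_hull_translation hull_mono)
  then show ?thesis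
    using assms(1) by (auto simp: add.commute)
qed

lemma not_extreme_point_raised:
  assumes "z \<in> newton_polygon l n a" and "0 < c"
  shows "\<not> (z + (0, c)) extreme_point_of newton_polygon l n a"
proof
  assume "(z + (0, c)) extreme_point_of newton_polygon l n a"
  moreover have "z + (0, 2 * c) \<in> newton_polygon l n a"
    using newton_polygon_translate_up[OF assms(1), of "2 * c"] assms(2) by simp
  moreover have "z + (0, c) \<in> open_segment z (z + (0, 2 * c))"
  proof -
    have "midpoint z (z + (0, 2 * c)) = z + (0, c)"
      by (simp add: midpoint_def prod_eq_iff)
    moreover have "z \<noteq> z + (0, 2 * c)"
      using assms(2) by (simp add: prod_eq_iff)
    ultimately show ?thesis
      by (metis midpoint_in_open_segment)
  qed
  ultimately show False
    using assms(1) unfolding extreme_point_of_def by blast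
qed

lemma extreme_point_newton_polygon:
  assumes "p extreme_point_of newton_polygon l n a"
  obtains i where "i \<in> NP_support n a" and "p = (real l ^ i, real (pval (a i)))"
proof -
  have "p \<in> NP_points l n a"
    using assms unfolding newton_polygon_eq_hull by (rule extreme_point_of_convex_hull)
  then obtain i y where i: "i \<in> NP_support n a" and p: "p = (real l ^ i, y)"
    and y: "real (pval (a i)) \<le> y"
    unfolding NP_points_def NP_support_def by blast
  have "(real l ^ i, real (pval (a i))) \<in> newton_polygon l n a"
    unfolding newton_polygon_eq_hull by (rule hull_inc) (rule vertex_in_NP_points[OF i])
  then have "y = real (pval (a i))"
    using not_extreme_point_raised[of "(real l ^ i, real (pval (a i)))" l n a "y - real (pval (a i))"]
      assms y p by fastforce
  then show ?thesis
    using that i p by blast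
qed

lemma not_extreme_point_above_chord:
  fixes x1 x2 x3 y1 y2 y3 :: real
  assumes "(x1, y1) \<in> newton_polygon l n a" and "(x3, y3) \<in> newton_polygon l n a"
    and "x1 < x2" and "x2 < x3" and above: "(y3 - y1) * (x2 - x1) < (y2 - y1) * (x3 - x1)"
  shows "\<not> (x2, y2) extreme_point_of newton_polygon l n a"
proof -
  define t where "t = (x3 - x2) / (x3 - x1)"
  have t: "0 \<le> t" "t \<le> 1" "1 - t = (x2 - x1) / (x3 - x1)"
    using assms(3,4) unfolding t_def by (auto simp: field_simps)
  define z where "z = t *\<^sub>R (x1, y1) + (1 - t) *\<^sub>R (x3, y3)"
  have "z \<in> newton_polygon l n a"
    using assms(1,2) t(1,2) unfolding z_def newton_polygon_eq_hull
    by (intro convexD[OF convex_convex_hull]) auto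
  moreover have "(x2, y2) = z + (0, y2 - (t * y1 + (1 - t) * y3))"
  proof -
    have "t * (x3 - x1) = x3 - x2"
      using assms(3,4) unfolding t_def by simp
    then have "x2 = t * x1 + (1 - t) * x3"
      by (simp add: algebra_simps)
    then show ?thesis
      unfolding z_def by simp
  qed
  moreover have "0 < y2 - (t * y1 + (1 - t) * y3)"
  proof -
    have "(y3 - y1) * (x2 - x1) / (x3 - x1) < y2 - y1"
      using above assms(3,4) by (simp add: pos_divide_less_eq)
    moreover have "(1 - t) * (y3 - y1) = (y3 - y1) * (x2 - x1) / (x3 - x1)"
      using t(3) by simp
    ultimately show ?thesis
      by (simp add: algebra_simps)
  qed
  ultimately show ?thesis
    using not_extreme_point_raised by metis
qed

definition NP_vertex_indices :: "nat \<Rightarrow> nat \<Rightarrow> (nat \<Rightarrow> 'a::zero poly) \<Rightarrow> nat set" where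
  "NP_vertex_indices l n a = {i. i \<le> n \<and> (\<exists>y. (real l ^ i, y) extreme_point_of newton_polygon l n a)}"

definition NP_x :: "nat \<Rightarrow> nat \<Rightarrow> (nat \<Rightarrow> 'a::zero poly) \<Rightarrow> nat \<Rightarrow> real" where
  "NP_x l n a s = real l ^ NP_alpha l n a s"

definition NP_y :: "nat \<Rightarrow> nat \<Rightarrow> (nat \<Rightarrow> 'a::zero poly) \<Rightarrow> nat \<Rightarrow> real" where
  "NP_y l n a s = real (NP_beta l n a s)"

definition NP_slope :: "nat \<Rightarrow> nat \<Rightarrow> (nat \<Rightarrow> 'a::zero poly) \<Rightarrow> nat \<Rightarrow> real" where
  "NP_slope l n a j = (NP_y l n a j - NP_y l n a (j - 1)) / (NP_x l n a j - NP_x l n a (j - 1))"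

lemma NP_mu_eq_slope: "real_of_rat (NP_mu l n a j) = NP_slope l n a j"
  unfolding NP_mu_def NP_slope_def NP_x_def NP_y_def
  by (simp add: of_rat_divide of_rat_diff of_rat_power)

lemma NP_alphas_eq: "NP_alphas l n a = sorted_list_of_set (NP_vertex_indices l n a)"
  unfolding NP_alphas_def NP_vertex_indices_def ..

lemma set_NP_alphas: "set (NP_alphas l n a) = NP_vertex_indices l n a"
  unfolding NP_alphas_eq by (simp add: NP_vertex_indices_def)

lemma NP_alpha_less: "s < s' \<Longrightarrow> s' < length (NP_alphas l n a) \<Longrightarrow> NP_alpha l n a s < NP_alpha l n a s'"
  unfolding NP_alpha_def NP_alphas_eq
  using strict_sorted_list_of_set sorted_wrt_iff_nth_less by blast

context mahler_operator
begin

lemma newton_polygon_extreme_minimizer: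
  obtains i0 where "i0 \<in> NP_support n a"
    and "(real l ^ i0, real (pval (a i0))) extreme_point_of newton_polygon l n a"
    and "\<And>i. i \<in> NP_support n a \<Longrightarrow> real (pval (a i0)) + c * real l ^ i0 \<le> real (pval (a i)) + c * real l ^ i"
proof -
  define g where "g i = real (pval (a i)) + c * real l ^ i" for i
  have "finite (NP_support n a)" and "NP_support n a \<noteq> {}"
    using a0_nonzero unfolding NP_support_def by auto
  then obtain i0 where i0: "i0 \<in> NP_support n a" and g_min: "\<And>i. i \<in> NP_support n a \<Longrightarrow> g i0 \<le> g i"
    and first: "\<And>i. i \<in> NP_support n a \<Longrightarrow> g i = g i0 \<Longrightarrow> i0 \<le> i"
    using finite_lex_argmin[of "NP_support n a" g] by blast
  have "(real l ^ i0, real (pval (a i0))) extreme_point_of convex hull NP_points l n a"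
  proof (rule extreme_point_of_convex_hull_lex_min[where a = "(c, 1)" and c = "(1, 0)"])
    show "(real l ^ i0, real (pval (a i0))) \<in> NP_points l n a"
      using i0 by (rule vertex_in_NP_points)
    fix q
    assume "q \<in> NP_points l n a"
    then obtain i y where q: "q = (real l ^ i, y)" and i: "i \<in> NP_support n a"
      and y: "real (pval (a i)) \<le> y"
      unfolding NP_points_def NP_support_def by blast
    have "g i0 \<le> c * real l ^ i + y"
      using g_min[OF i] y unfolding g_def by simp
    moreover have "real l ^ i0 \<le> real l ^ i" if "c * real l ^ i + y = g i0"
    proof -
      have "g i = g i0"
        using g_min[OF i] y that unfolding g_def by simp
      then show ?thesis
        using first[OF i] l_ge_2 by simp
    qed
    ultimately show "(c, 1) \<bullet> (real l ^ i0, real (pval (a i0))) < (c, 1) \<bullet> q \<or>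
        (c, 1) \<bullet> q = (c, 1) \<bullet> (real l ^ i0, real (pval (a i0))) \<and>
        (1, 0) \<bullet> (real l ^ i0, real (pval (a i0))) \<le> (1, 0) \<bullet> q"
      using q unfolding g_def by (auto simp: inner_real_def)
  qed (auto simp: inner_real_def prod_eq_iff)
  then show ?thesis
    using that i0 g_min unfolding newton_polygon_eq_hull g_def by auto
qed

lemma NP_alpha_vertex:
  assumes "s < length (NP_alphas l n a)"
  shows "NP_alpha l n a s \<in> NP_support n a"
    and "(NP_x l n a s, NP_y l n a s) extreme_point_of newton_polygon l n a"
proof -
  have "NP_alpha l n a s \<in> NP_vertex_indices l n a"
    using assms unfolding NP_alpha_def set_NP_alphas[symmetric] by simp
  then obtain y where y: "(real l ^ NP_alpha l n a s, y) extreme_point_of newton_polygon l n a"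
    unfolding NP_vertex_indices_def by blast
  then obtain i where "i \<in> NP_support n a" and "(real l ^ NP_alpha l n a s, y) = (real l ^ i, real (pval (a i)))"
    by (rule extreme_point_newton_polygon)
  moreover from this have "NP_alpha l n a s = i"
    using l_ge_2 by (simp add: power_inject_exp)
  ultimately show "NP_alpha l n a s \<in> NP_support n a"
    and "(NP_x l n a s, NP_y l n a s) extreme_point_of newton_polygon l n a"
    using y unfolding NP_x_def NP_y_def NP_beta_def by auto
qed

lemma NP_vertex_in_newton_polygon:
  "s < length (NP_alphas l n a) \<Longrightarrow> (NP_x l n a s, NP_y l n a s) \<in> newton_polygon l n a"
  using NP_alpha_vertex(2) extreme_point_of_def by blast

lemma NP_vertex_in_PL: "s < length (NP_alphas l n a) \<Longrightarrow> (NP_alpha l n a s, NP_beta l n a s) \<in> PL n a"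
  using NP_alpha_vertex(1) pval_in_PL unfolding NP_support_def NP_beta_def by blast

lemma NP_vertex_index:
  assumes "i \<in> NP_support n a" and "(real l ^ i, real (pval (a i))) extreme_point_of newton_polygon l n a"
  obtains s where "s < length (NP_alphas l n a)" and "NP_alpha l n a s = i"
proof -
  have "i \<in> set (NP_alphas l n a)"
    using assms unfolding set_NP_alphas NP_vertex_indices_def NP_support_def by auto
  then show ?thesis
    using that unfolding NP_alpha_def by (metis in_set_conv_nth)
qed

lemma NP_x_less: "s < s' \<Longrightarrow> s' < length (NP_alphas l n a) \<Longrightarrow> NP_x l n a s < NP_x l n a s'"
  unfolding NP_x_def using NP_alpha_less l_ge_2 by simp

lemma NP_edge_line:
  assumes "1 \<le> j" and "j < length (NP_alphas l n a)"
  shows "NP_y l n a j - NP_slope l n a j * NP_x l n a j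
    = NP_y l n a (j - 1) - NP_slope l n a j * NP_x l n a (j - 1)"
proof -
  have "NP_x l n a (j - 1) < NP_x l n a j"
    using NP_x_less assms by simp
  then show ?thesis
    unfolding NP_slope_def by (simp add: field_simps)
qed

lemma NP_vertex_above_edge:
  assumes j: "1 \<le> j" "j < length (NP_alphas l n a)" and s: "s < length (NP_alphas l n a)"
  shows "NP_y l n a j - NP_slope l n a j * NP_x l n a j \<le> NP_y l n a s - NP_slope l n a j * NP_x l n a s"
proof (rule ccontr)
  let ?m = "NP_slope l n a j" and ?x = "NP_x l n a" and ?y = "NP_y l n a"
  define G where "G = ?y j - ?m * ?x j"
  assume "\<not> ?thesis"
  then have below: "?y s - ?m * ?x s < G"
    unfolding G_def by simp
  have edge: "?y j - ?m * ?x j = G" "?y (j - 1) - ?m * ?x (j - 1) = G"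
    using NP_edge_line[OF j] unfolding G_def by simp_all
  have "j - 1 < length (NP_alphas l n a)"
    using j by simp
  then have in_NP: "(?x t, ?y t) \<in> newton_polygon l n a" if "t \<in> {s, j - 1, j}" for t
    using that NP_vertex_in_newton_polygon s j by auto
  have "s \<noteq> j" "s \<noteq> j - 1"
    using below edge by auto
  then consider "s < j - 1" | "j < s"
    by linarith
  then show False
  proof cases
    case 1
    have x: "?x s < ?x (j - 1)" "?x (j - 1) < ?x j"
      using NP_x_less 1 j by auto
    have "(?y j - ?y s) * (?x (j - 1) - ?x s) < (?y (j - 1) - ?y s) * (?x j - ?x s)"
    proof -
      have "0 < (G - (?y s - ?m * ?x s)) * (?x j - ?x (j - 1))"
        using below x by simp
      then show ?thesis
        using edge by (simp add: algebra_simps)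
    qed
    then have "\<not> (?x (j - 1), ?y (j - 1)) extreme_point_of newton_polygon l n a"
      using x in_NP by (intro not_extreme_point_above_chord) auto
    then show False
      using NP_alpha_vertex(2) \<open>j - 1 < length (NP_alphas l n a)\<close> by blast
  next
    case 2
    have x: "?x (j - 1) < ?x j" "?x j < ?x s"
      using NP_x_less 2 j s by auto
    have "(?y s - ?y (j - 1)) * (?x j - ?x (j - 1)) < (?y j - ?y (j - 1)) * (?x s - ?x (j - 1))"
    proof -
      have "0 < (G - (?y s - ?m * ?x s)) * (?x j - ?x (j - 1))"
        using below x by simp
      then show ?thesis
        using edge by (simp add: algebra_simps)
    qed
    then have "\<not> (?x j, ?y j) extreme_point_of newton_polygon l n a"
      using x in_NP by (intro not_extreme_point_above_chord) auto
    then show False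
      using NP_alpha_vertex(2) j by blast
  qed
qed

text \<open>The minimiser of y - mu_j x over the Newton polygon is a vertex, and vertices lie above
  the line through the edge of slope mu_j.\<close>
lemma PL_above_edge:
  assumes j: "1 \<le> j" "j < length (NP_alphas l n a)" and "(i, y) \<in> PL n a"
  shows "NP_y l n a (j - 1) + NP_slope l n a j * (real l ^ i - NP_x l n a (j - 1)) \<le> real y"
proof -
  let ?m = "NP_slope l n a j"
  obtain r where r: "r \<in> NP_support n a"
    "(real l ^ r, real (pval (a r))) extreme_point_of newton_polygon l n a"
    "\<And>i. i \<in> NP_support n a \<Longrightarrow> real (pval (a r)) + - ?m * real l ^ r \<le> real (pval (a i)) + - ?m * real l ^ i"
    using newton_polygon_extreme_minimizer[where c = "- ?m"] by blast
  obtain s where s: "s < length (NP_alphas l n a)" "NP_alpha l n a s = r"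
    using NP_vertex_index[OF r(1,2)] .
  have "i \<in> NP_support n a" "pval (a i) \<le> y"
    using \<open>(i, y) \<in> PL n a\<close> unfolding PL_def NP_support_def by (auto intro: pval_le)
  then have "NP_y l n a s - ?m * NP_x l n a s \<le> real y - ?m * real l ^ i"
    using r(3) s(2) unfolding NP_x_def NP_y_def NP_beta_def by force
  moreover have "NP_y l n a (j - 1) - ?m * NP_x l n a (j - 1) \<le> NP_y l n a s - ?m * NP_x l n a s"
    using NP_vertex_above_edge[OF j s(1)] NP_edge_line[OF j] by simp
  ultimately show ?thesis
    by (simp add: algebra_simps)
qed

lemma NP_slope_mono:
  assumes "1 \<le> j" and "j \<le> j'" and "j' < length (NP_alphas l n a)"
  shows "NP_slope l n a j \<le> NP_slope l n a j'"
  using assms(2,3)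
proof (induction j' rule: dec_induct)
  case (step j')
  have "NP_y l n a (j' - 1) + NP_slope l n a j' * (NP_x l n a (Suc j') - NP_x l n a (j' - 1))
      \<le> NP_y l n a (Suc j')"
    using PL_above_edge[OF _ _ NP_vertex_in_PL] assms(1) step unfolding NP_x_def NP_y_def by simp
  moreover have "NP_y l n a j' = NP_y l n a (j' - 1) + NP_slope l n a j' * (NP_x l n a j' - NP_x l n a (j' - 1))"
    using NP_edge_line[of j'] assms(1) step by (simp add: algebra_simps)
  moreover have "NP_x l n a j' < NP_x l n a (Suc j')"
    using NP_x_less step by simp
  ultimately have "NP_slope l n a j' \<le> NP_slope l n a (Suc j')"
    unfolding NP_slope_def[of l n a "Suc j'"] by (simp add: pos_le_divide_eq algebra_simps)
  with step show ?case
    by simp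
qed simp

lemma NP_alpha_0: "NP_alpha l n a 0 = 0"
proof -
  have "0 \<in> NP_support n a"
    using a0_nonzero unfolding NP_support_def by simp
  have "(real l ^ 0, real (pval (a 0))) extreme_point_of convex hull NP_points l n a"
  proof (rule extreme_point_of_convex_hull_lex_min[where a = "(1, 0)" and c = "(0, 1)"])
    show "(real l ^ 0, real (pval (a 0))) \<in> NP_points l n a"
      using \<open>0 \<in> NP_support n a\<close> by (rule vertex_in_NP_points)
    fix q
    assume "q \<in> NP_points l n a"
    then obtain i y where "q = (real l ^ i, y)" and "real (pval (a i)) \<le> y"
      unfolding NP_points_def by blast
    moreover have "1 < real l ^ i" if "i \<noteq> 0"
      using l_ge_2 that by simp
    ultimately show "(1, 0) \<bullet> (real l ^ 0, real (pval (a 0))) < (1, 0) \<bullet> q \<or>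
        (1, 0) \<bullet> q = (1, 0) \<bullet> (real l ^ 0, real (pval (a 0))) \<and>
        (0, 1) \<bullet> (real l ^ 0, real (pval (a 0))) \<le> (0, 1) \<bullet> q"
      by (cases "i = 0") (auto simp: inner_real_def)
  qed (auto simp: inner_real_def prod_eq_iff)
  then obtain s where s: "s < length (NP_alphas l n a)" "NP_alpha l n a s = 0"
    using NP_vertex_index[OF \<open>0 \<in> NP_support n a\<close>] unfolding newton_polygon_eq_hull by blast
  then show ?thesis
    using NP_alpha_less[of 0 s l n a] by (cases s) auto
qed

lemma PL_above_vertex_line:
  assumes k: "1 \<le> k" "k < length (NP_alphas l n a)"
    and W: "- NP_slope l n a k \<le> W" "2 \<le> k \<longrightarrow> W < - NP_slope l n a (k - 1)"
    and "(i, y) \<in> PL n a"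
  shows "W * NP_x l n a (k - 1) + NP_y l n a (k - 1) \<le> W * real l ^ i + real y"
proof (cases "NP_x l n a (k - 1) \<le> real l ^ i")
  case True
  have "NP_y l n a (k - 1) + NP_slope l n a k * (real l ^ i - NP_x l n a (k - 1)) \<le> real y"
    using PL_above_edge k \<open>(i, y) \<in> PL n a\<close> by blast
  moreover have "0 \<le> (NP_slope l n a k + W) * (real l ^ i - NP_x l n a (k - 1))"
    using True W by simp
  ultimately show ?thesis
    by (simp add: algebra_simps)
next
  case False
  have "k \<noteq> 1"
  proof
    assume "k = 1"
    then have "NP_x l n a (k - 1) = 1"
      using NP_alpha_0 unfolding NP_x_def by simp
    with False show False
      using l_ge_2 by simp
  qed
  then have k1: "1 \<le> k - 1" "k - 1 < length (NP_alphas l n a)"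
    using k by auto
  have "NP_y l n a (k - 1 - 1) + NP_slope l n a (k - 1) * (real l ^ i - NP_x l n a (k - 1 - 1)) \<le> real y"
    using PL_above_edge k1 \<open>(i, y) \<in> PL n a\<close> by blast
  moreover have "NP_y l n a (k - 1) = NP_y l n a (k - 1 - 1) + NP_slope l n a (k - 1) * (NP_x l n a (k - 1) - NP_x l n a (k - 1 - 1))"
    using NP_edge_line[OF k1] by (simp add: algebra_simps)
  moreover have "0 \<le> (NP_slope l n a (k - 1) + W) * (real l ^ i - NP_x l n a (k - 1))"
    using False W \<open>k \<noteq> 1\<close> k by (intro mult_nonpos_nonpos) auto
  ultimately show ?thesis
    by (simp add: algebra_simps)
qed

end


section \<open>The lower bound for epsilon\<close>

definition pos_rat_or_infinity :: "ereal \<Rightarrow> bool" where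
  "pos_rat_or_infinity t \<longleftrightarrow> 0 < t \<and> (t = \<infinity> \<or> (\<exists>q. t = ereal (real_of_rat q)))"

definition eps_bound_terms :: "nat \<Rightarrow> nat \<Rightarrow> (nat \<Rightarrow> 'a::zero poly) \<Rightarrow> nat \<Rightarrow> rat \<Rightarrow> ereal set" where
  "eps_bound_terms l n a k w =
     {eps l n a w' * ereal (real l powi (int (dww l n a w w') - int (NP_alpha l n a (k - 1)))) | w'. w' \<in> Delta l n a w}
     \<union> {if k = 1 then \<infinity> else ereal (real_of_rat (- NP_mu l n a (k - 1) - w)),
        Inf ((ereal \<circ> real_of_rat) ` (piL l n a ` Psi l n a w - {w})) - ereal (real_of_rat w)}"

context mahler_operator
begin

lemma NP_mu_mono:
  assumes "1 \<le> j" and "j \<le> j'" and "j' \<le> NP_kappa l n a"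
  shows "NP_mu l n a j \<le> NP_mu l n a j'"
proof -
  have "j' < length (NP_alphas l n a)"
    using assms unfolding NP_kappa_def by simp
  then have "NP_slope l n a j \<le> NP_slope l n a j'"
    using NP_slope_mono assms by blast
  then show ?thesis
    by (simp flip: NP_mu_eq_slope add: of_rat_less_eq)
qed

lemma eps_times_pow_le:
  assumes "v \<in> Vset l n a" and "w' < v" and "d \<le> i"
  shows "eps l n a w' * ereal (real l powi (int d - int \<alpha>))
    \<le> ereal (real_of_rat ((v - w') * of_nat l ^ i / of_nat l ^ \<alpha>))"
proof -
  have pow_mono: "real l powi (int d - int \<alpha>) \<le> real l powi (int i - int \<alpha>)"
    using assms(3) l_ge_2 by (intro power_int_increasing) auto
  have "eps l n a w' * ereal (real l powi (int d - int \<alpha>))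
      \<le> ereal (real_of_rat (v - w')) * ereal (real l powi (int d - int \<alpha>))"
    using eps_le[OF assms(1,2)] l_ge_2 by (intro ereal_mult_right_mono) auto
  also have "\<dots> = ereal (real_of_rat (v - w') * real l powi (int d - int \<alpha>))"
    by simp
  also have "\<dots> \<le> ereal (real_of_rat (v - w') * real l powi (int i - int \<alpha>))"
    using pow_mono assms(2) by (simp add: mult_left_mono of_rat_less_eq)
  also have "real_of_rat (v - w') * real l powi (int i - int \<alpha>) = real_of_rat ((v - w') * of_nat l ^ i / of_nat l ^ \<alpha>)"
    using l_ge_2 by (simp add: power_int_diff of_rat_mult of_rat_divide of_rat_power)
  finally show ?thesis .
qed

lemma pos_rat_or_infinity_eps_times_pow: "pos_rat_or_infinity (eps l n a v * ereal (real l powi e))"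
proof -
  have "0 < real l powi e" and pow_rat: "real l powi e = real_of_rat (of_nat l powi e)"
    using l_ge_2 by (simp_all add: of_rat_power_int)
  then show ?thesis
  proof (cases rule: eps_cases[of v])
    case 1
    then show ?thesis
      unfolding pos_rat_or_infinity_def using \<open>0 < real l powi e\<close> l_ge_2 by simp
  next
    case (2 u)
    have t_eq: "eps l n a v * ereal (real l powi e) = ereal (real_of_rat ((u - v) * of_nat l powi e))"
      using 2 pow_rat by (simp add: of_rat_mult)
    have "0 < real_of_rat (u - v) * real l powi e"
      using 2 \<open>0 < real l powi e\<close> by (simp add: of_rat_less)
    then have "0 < eps l n a v * ereal (real l powi e)"
      unfolding t_eq using pow_rat by (simp add: of_rat_mult)
    then show ?thesis
      unfolding pos_rat_or_infinity_def using t_eq by blast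
  qed
qed

lemma pos_rat_or_infinity_piL_gap:
  "pos_rat_or_infinity (Inf ((ereal \<circ> real_of_rat) ` (piL l n a ` Psi l n a w - {w})) - ereal (real_of_rat w))"
proof -
  define X where "X = piL l n a ` Psi l n a w - {w}"
  show ?thesis
  proof (cases "X = {}")
    case True
    then show ?thesis
      unfolding pos_rat_or_infinity_def X_def[symmetric] by (simp add: top_ereal_def)
  next
    case False
    have "finite X"
      unfolding X_def using finite_Psi by simp
    then have "Inf ((ereal \<circ> real_of_rat) ` X) \<in> (ereal \<circ> real_of_rat) ` X"
      using False by (intro Inf_finite_mem) auto
    then obtain u where "u \<in> X" and inf_eq: "Inf ((ereal \<circ> real_of_rat) ` X) = ereal (real_of_rat u)"
      by auto
    moreover from \<open>u \<in> X\<close> obtain i j where "(i, j) \<in> PL n a"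
      and "u = piL l n a (w * of_nat l ^ i + of_nat j)" and "u \<noteq> w"
      unfolding X_def by (auto simp: Psi_def)
    ultimately have "w < u"
      using le_piL[of i j w] by simp
    moreover have "Inf ((ereal \<circ> real_of_rat) ` X) - ereal (real_of_rat w) = ereal (real_of_rat (u - w))"
      using inf_eq by (simp add: of_rat_diff)
    ultimately show ?thesis
      unfolding pos_rat_or_infinity_def X_def[symmetric] by (auto simp: of_rat_less simp del: of_rat_diff)
  qed
qed

context
  fixes k :: nat and w :: rat
  assumes k_ge_1: "1 \<le> k" and k_le_kappa: "k \<le> NP_kappa l n a"
    and slope_k: "- NP_mu l n a k \<le> w" and slope_k1: "2 \<le> k \<longrightarrow> w < - NP_mu l n a (k - 1)"
begin

lemma k_less_length: "k < length (NP_alphas l n a)"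
  using k_ge_1 k_le_kappa unfolding NP_kappa_def by simp

lemma psi_at_vertex: "psi l n a w = w * of_nat l ^ NP_alpha l n a (k - 1) + of_nat (NP_beta l n a (k - 1))"
proof (rule antisym)
  show "psi l n a w \<le> w * of_nat l ^ NP_alpha l n a (k - 1) + of_nat (NP_beta l n a (k - 1))"
    using k_less_length by (intro psi_le NP_vertex_in_PL) simp
  obtain i j where ij: "(i, j) \<in> PL n a" and psi_eq: "psi l n a w = w * of_nat l ^ i + of_nat j"
    using psi_attained[of w] by blast
  have "- NP_slope l n a k \<le> real_of_rat w" "2 \<le> k \<longrightarrow> real_of_rat w < - NP_slope l n a (k - 1)"
    using slope_k slope_k1 by (simp_all flip: NP_mu_eq_slope of_rat_minus add: of_rat_less_eq of_rat_less)
  then have "real_of_rat w * NP_x l n a (k - 1) + NP_y l n a (k - 1) \<le> real_of_rat w * real l ^ i + real j"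
    using PL_above_vertex_line[OF k_ge_1 k_less_length _ _ ij] by blast
  then have "real_of_rat (w * of_nat l ^ NP_alpha l n a (k - 1) + of_nat (NP_beta l n a (k - 1)))
      \<le> real_of_rat (w * of_nat l ^ i + of_nat j)"
    unfolding NP_x_def NP_y_def by (simp add: of_rat_add of_rat_mult of_rat_power)
  then show "w * of_nat l ^ NP_alpha l n a (k - 1) + of_nat (NP_beta l n a (k - 1)) \<le> psi l n a w"
    unfolding psi_eq by (simp only: of_rat_less_eq)
qed

lemma initial_gap_bound:
  assumes "u \<in> Vi l n a 0" and "w < u"
  shows "(if k = 1 then \<infinity> else ereal (real_of_rat (- NP_mu l n a (k - 1) - w))) \<le> ereal (real_of_rat (u - w))"
proof -
  obtain j where j: "1 \<le> j" "j \<le> NP_kappa l n a" and u: "u = - NP_mu l n a j"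
    using assms(1) by (auto simp: NP_slopes_def)
  have "j < k"
  proof (rule ccontr)
    assume "\<not> j < k"
    then have "NP_mu l n a k \<le> NP_mu l n a j"
      using NP_mu_mono[of k j] k_ge_1 j by simp
    with u slope_k assms(2) show False
      by simp
  qed
  then have "k \<noteq> 1" and "NP_mu l n a j \<le> NP_mu l n a (k - 1)"
    using NP_mu_mono[of j "k - 1"] j k_le_kappa by auto
  then show ?thesis
    using u by (simp add: of_rat_less_eq)
qed

text \<open>w' is the element of Delta(w) contributed by the monomial (i, j); the gap u - w is at
  least (v - w') l^(i - alpha_(k-1)) because psi(w) is attained at the vertex p_(k-1).\<close>
lemma Delta_gap_bound:
  assumes v: "v \<in> Vset l n a" "v < w" and ij: "(i, j) \<in> PL n a"
    and u: "u = piL l n a (v * of_nat l ^ i + of_nat j)" "w < u"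
  obtains w' where "w' \<in> Delta l n a w"
    and "eps l n a w' * ereal (real l powi (int (dww l n a w w') - int (NP_alpha l n a (k - 1))))
      \<le> ereal (real_of_rat (u - w))"
proof -
  define \<alpha> where "\<alpha> = NP_alpha l n a (k - 1)"
  define \<beta> where "\<beta> = NP_beta l n a (k - 1)"
  define q where "q = v * of_nat l ^ i + of_nat j"
  define w' where "w' = (psi l n a w - of_nat j) / of_nat l ^ i"
  have "psi l n a w < q"
  proof (rule ccontr)
    assume "\<not> psi l n a w < q"
    then have "u \<le> w"
      using piL_mono[of q "psi l n a w"] piL_psi u(1) unfolding q_def by simp
    with u(2) show False
      by simp
  qed
  moreover have q_eq: "q = psi l n a w + (v - w') * of_nat l ^ i"
    unfolding q_def w'_def using pow_l_pos[of i] by (simp add: field_simps)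
  ultimately have "w' < v"
    using pow_l_pos[of i] by (simp add: zero_less_mult_iff)
  then have "w' \<in> Delta l n a w"
    unfolding Delta_def w'_def using ij v(2) w'_def by auto
  have "dww l n a w w' \<le> i"
    unfolding dww_def by (rule Least_le) (use ij in \<open>auto simp: PL_def w'_def\<close>)
  with v(1) \<open>w' < v\<close> have "eps l n a w' * ereal (real l powi (int (dww l n a w w') - int \<alpha>))
      \<le> ereal (real_of_rat ((v - w') * of_nat l ^ i / of_nat l ^ \<alpha>))"
    by (rule eps_times_pow_le)
  also have "(v - w') * of_nat l ^ i / of_nat l ^ \<alpha> = (q - of_nat \<beta>) / of_nat l ^ \<alpha> - w"
    using pow_l_pos[of \<alpha>] unfolding q_eq psi_at_vertex \<alpha>_def \<beta>_def by (simp add: field_simps)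
  also have "(q - of_nat \<beta>) / of_nat l ^ \<alpha> \<le> u"
    using piL_ge[OF NP_vertex_in_PL[OF k_less_length[THEN less_imp_diff_less]]] u(1)
    unfolding q_def \<alpha>_def \<beta>_def by simp
  then have "ereal (real_of_rat ((q - of_nat \<beta>) / of_nat l ^ \<alpha> - w)) \<le> ereal (real_of_rat (u - w))"
    by (simp add: of_rat_less_eq)
  finally show ?thesis
    using that \<open>w' \<in> Delta l n a w\<close> unfolding \<alpha>_def by blast
qed

lemma Inf_eps_bound_le_gap:
  assumes "u \<in> Vi l n a m" and "w < u"
  shows "Inf (eps_bound_terms l n a k w) \<le> ereal (real_of_rat (u - w))"
  using assms
proof (induction m arbitrary: u)
  case 0
  then show ?case
    using initial_gap_bound unfolding eps_bound_terms_def by (blast intro: Inf_lower2)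
next
  case (Suc m)
  then obtain v i j where v: "v \<in> Vi l n a m" and ij: "(i, j) \<in> PL n a"
    and u: "u = piL l n a (v * of_nat l ^ i + of_nat j)"
    by (auto simp: Psi_def)
  consider "w < v" | "v = w" | "v < w"
    by linarith
  then show ?case
  proof cases
    case 1
    have "v \<le> u"
      using u le_piL[OF ij] by simp
    then have "ereal (real_of_rat (v - w)) \<le> ereal (real_of_rat (u - w))"
      by (simp add: of_rat_less_eq)
    then show ?thesis
      by (rule order_trans[OF Suc.IH[OF v 1]])
  next
    case 2
    then have "u \<in> piL l n a ` Psi l n a w - {w}"
      using u ij Suc.prems(2) by (auto simp: Psi_def)
    then have "Inf ((ereal \<circ> real_of_rat) ` (piL l n a ` Psi l n a w - {w})) - ereal (real_of_rat w)
        \<le> ereal (real_of_rat u) - ereal (real_of_rat w)"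
      by (intro ereal_minus_mono Inf_lower) auto
    moreover have "Inf ((ereal \<circ> real_of_rat) ` (piL l n a ` Psi l n a w - {w})) - ereal (real_of_rat w)
        \<in> eps_bound_terms l n a k w"
      unfolding eps_bound_terms_def by simp
    ultimately show ?thesis
      by (intro Inf_lower2) (auto simp: of_rat_diff)
  next
    case 3
    obtain w' where "w' \<in> Delta l n a w"
      and "eps l n a w' * ereal (real l powi (int (dww l n a w w') - int (NP_alpha l n a (k - 1))))
        \<le> ereal (real_of_rat (u - w))"
      using Delta_gap_bound[of v i j u] v ij u 3 Suc.prems(2) unfolding Vset_def by blast
    then show ?thesis
      unfolding eps_bound_terms_def by (blast intro: Inf_lower2)
  qed
qed

lemma Inf_eps_bound_le_eps: "Inf (eps_bound_terms l n a k w) \<le> eps l n a w"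
proof (cases rule: eps_cases[of w])
  case 1
  then show ?thesis
    by simp
next
  case (2 u)
  then obtain m where "u \<in> Vi l n a m"
    unfolding Vset_def by blast
  with 2 show ?thesis
    using Inf_eps_bound_le_gap by simp
qed

lemma pos_rat_or_infinity_eps_bound_terms:
  assumes "t \<in> eps_bound_terms l n a k w"
  shows "pos_rat_or_infinity t"
proof -
  consider w' where "t = eps l n a w' * ereal (real l powi (int (dww l n a w w') - int (NP_alpha l n a (k - 1))))"
    | "t = (if k = 1 then \<infinity> else ereal (real_of_rat (- NP_mu l n a (k - 1) - w)))"
    | "t = Inf ((ereal \<circ> real_of_rat) ` (piL l n a ` Psi l n a w - {w})) - ereal (real_of_rat w)"
    using assms unfolding eps_bound_terms_def by blast
  then show ?thesis
  proof cases
    case 1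
    then show ?thesis
      using pos_rat_or_infinity_eps_times_pow by simp
  next
    case 2
    then show ?thesis
      unfolding pos_rat_or_infinity_def using k_ge_1 slope_k1 by (auto simp: of_rat_less)
  next
    case 3
    then show ?thesis
      using pos_rat_or_infinity_piL_gap by simp
  qed
qed

lemma pos_rat_or_infinity_Inf_eps_bound: "pos_rat_or_infinity (Inf (eps_bound_terms l n a k w))"
proof -
  have "Delta l n a w \<subseteq> (\<lambda>(\<alpha>, \<beta>). (psi l n a w - of_nat \<beta>) / of_nat l ^ \<alpha>) ` PL n a"
    unfolding Delta_def by auto
  then have "finite (Delta l n a w)"
    using finite_PL by (rule finite_subset[OF _ finite_imageI])
  then have "finite (eps_bound_terms l n a k w)"
    unfolding eps_bound_terms_def by simp
  then have "Inf (eps_bound_terms l n a k w) \<in> eps_bound_terms l n a k w"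
    by (rule Inf_finite_mem) (simp add: eps_bound_terms_def)
  then show ?thesis
    by (rule pos_rat_or_infinity_eps_bound_terms)
qed

end

end

theorem mainTheorem15:
  fixes l n k :: nat and a :: "nat \<Rightarrow> 'a::field poly" and w :: rat
  assumes "l \<ge> 2" and "n \<ge> 1" and "a 0 \<noteq> 0" and "a n \<noteq> 0"
    and "w > - NP_mu l n a (NP_kappa l n a)"
    and "1 \<le> k" and "k \<le> NP_kappa l n a"
    and "- NP_mu l n a k \<le> w"
    and "k \<ge> 2 \<longrightarrow> w < - NP_mu l n a (k - 1)"
  shows "let M = Inf ({eps l n a w' * ereal (real l powi (int (dww l n a w w') - int (NP_alpha l n a (k - 1))))
                        | w'. w' \<in> Delta l n a w}
                      \<union> {if k = 1 then \<infinity> else ereal (real_of_rat (- NP_mu l n a (k - 1) - w)),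
                         Inf ((ereal \<circ> real_of_rat) ` (piL l n a ` Psi l n a w - {w})) - ereal (real_of_rat w)})
         in M \<le> eps l n a w \<and> 0 < M \<and> (M = \<infinity> \<or> (\<exists>q::rat. M = ereal (real_of_rat q)))"
proof -
  interpret mahler_operator l n a
    using assms(1,3) by unfold_locales
  have "Inf (eps_bound_terms l n a k w) \<le> eps l n a w"
    using Inf_eps_bound_le_eps assms(6-9) by blast
  moreover have "pos_rat_or_infinity (Inf (eps_bound_terms l n a k w))"
    using pos_rat_or_infinity_Inf_eps_bound assms(6-9) by blast
  ultimately show ?thesis
    unfolding Let_def eps_bound_terms_def[symmetric] pos_rat_or_infinity_def by blast
qed

end
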